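(* Let $b\in\mathbb{N}\setminus\{1\}$, $\xi_m\in\{-1,+1\}$ ($m\in\mathbb{Z}_+$) arbitrary, $\phi:\mathbb{R}\to\mathbb{R}$ periodic with period $1$, vanishing on $\mathbb{Z}$, and H\"older continuous with exponent $\gamma\in(0,1]$, and $\psi:(0,\infty)\to(0,\infty)$ submultiplicative with $\psi(b^{-1})\in(0,1)$. Let $f(t)=\sum_{m=0}^\infty \xi_m\psi(b^{-m})\phi(b^mt)$, $t\in[0,1]$, let $\Pi_n:=\{kb^{-n}:k=0,1,\dots,b^n\}$, $n\in\mathbb{N}$, and let $p\ge1$. (i) If $\psi(b^{-1})<b^{-\gamma}$, then $\limsup_{n\to\infty}\frac{RV^p_n(f,\Pi_n)}{b^{p(1-\gamma)n}}<\infty$. (ii) If $\psi(b^{-1})=b^{-\gamma}$, then $\limsup_{n\to\infty}\frac{RV^p_n(f,\Pi_n)}{n^pb^{p(1-\gamma)n}}<\infty$. (iii) If $\psi(b^{-1})>b^{-\gamma}$, then $\limsup_{n\to\infty}\frac{RV^p_n(f,\Pi_n)}{b^{p(1-\beta)n}}<\infty$, where $\beta:=-\log_b(\psi(b^{-1}))\in(0,\gamma)$.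
   Context: $\psi$ submultiplicative: $\psi(xy)\le\psi(x)\psi(y)$ for $x,y>0$. For $g:[0,1]\to\mathbb{R}$, $p\ge1$ and a partition $\mathcal{P}=\{0=t_0<t_1<\dots<t_N=1\}$ of $[0,1]$, the $p^{\mathrm{th}}$-order Riesz variation is $RV^p(g,\mathcal{P}):=\sum_{k=0}^{N-1}\frac{|g(t_{k+1})-g(t_k)|^p}{(t_{k+1}-t_k)^{p-1}}$; for the $b$-adic partition this is $RV^p_n(g,\Pi_n)=b^{n(p-1)}\sum_{k=0}^{b^n-1}|g((k+1)b^{-n})-g(kb^{-n})|^p$. *)

theory Defs
  imports "HOL-Analysis.Analysis"
begin

definition riesz_var_badic :: "nat \<Rightarrow> real \<Rightarrow> (real \<Rightarrow> real) \<Rightarrow> nat \<Rightarrow> real" where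
  "riesz_var_badic b p g n =
     real b powr (real n * (p - 1)) *
     (\<Sum>k<b ^ n. \<bar>g (real (k + 1) / real b ^ n) - g (real k / real b ^ n)\<bar> powr p)"

definition submultiplicative :: "(real \<Rightarrow> real) \<Rightarrow> bool" where
  "submultiplicative \<psi> \<longleftrightarrow> (\<forall>x>0. \<forall>y>0. \<psi> (x * y) \<le> \<psi> x * \<psi> y)"

end

(* At a b-adic point k b^-n the m-th term of the series vanishes for every m >= n, since b^m k b^-n
   is an integer. So each increment of f over a cell of Pi_n is a finite sum, and the Hoelder bound
   on phi together with psi(b^-m) <= psi(1) psi(1/b)^m bounds it by
   C psi(1) b^(-gamma n) sum_{m<n} q^m,  where q = psi(1/b) b^gamma.
   Hence RV^p_n(f) <= (C psi(1) b^((1-gamma) n) sum_{m<n} q^m)^p, and the three regimes of the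
   theorem are those of the geometric sum: q < 1, q = 1 and q > 1, where b^((1-gamma) n) q^n is
   b^((1-beta) n). Only b-adic points enter. *)

theory Submission
  imports Defs
begin

lemma submultiplicative_power_le:
  assumes "submultiplicative \<psi>" "x > 0" "\<psi> x \<ge> 0"
  shows "\<psi> (x ^ m) \<le> \<psi> 1 * \<psi> x ^ m"
proof (induction m)
  case 0
  then show ?case by simp
next
  case (Suc m)
  have "\<psi> (x ^ Suc m) \<le> \<psi> (x ^ m) * \<psi> x"
    using assms unfolding submultiplicative_def by (simp add: mult.commute)
  also have "\<dots> \<le> \<psi> 1 * \<psi> x ^ m * \<psi> x"
    using Suc assms(3) by (rule mult_right_mono)
  finally show ?case by (simp add: mult_ac)
qed

lemma badic_series_eq_partial_sum:
  fixes b k n :: nat and c :: "nat \<Rightarrow> real"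
  assumes "b > 0" and \<phi>_nat: "\<And>j::nat. \<phi> (real j) = 0"
  shows "(\<Sum>m. c m * \<phi> (real b ^ m * (real k / real b ^ n)))
       = (\<Sum>m<n. c m * \<phi> (real b ^ m * (real k / real b ^ n)))"
proof (rule suminf_finite)
  fix m assume "m \<notin> {..<n}"
  then have "real b ^ m = real b ^ n * real b ^ (m - n)"
    by (simp flip: power_add)
  then have integral: "real b ^ m * (real k / real b ^ n) = real (k * b ^ (m - n))"
    using assms(1) by simp
  show "c m * \<phi> (real b ^ m * (real k / real b ^ n)) = 0"
    unfolding integral \<phi>_nat by simp
qed simp

lemma badic_increment_le:
  fixes b k n :: nat and c :: "nat \<Rightarrow> real"
  assumes "b > 0"
    and \<phi>_nat: "\<And>j::nat. \<phi> (real j) = 0"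
    and \<phi>_hoelder: "\<And>x y. \<bar>\<phi> x - \<phi> y\<bar> \<le> C * \<bar>x - y\<bar> powr \<gamma>"
    and c_le: "\<And>m. \<bar>c m\<bar> \<le> K * a ^ m"
    and f: "\<And>t. f t = (\<Sum>m. c m * \<phi> (real b ^ m * t))"
  shows "\<bar>f (real (k + 1) / real b ^ n) - f (real k / real b ^ n)\<bar>
       \<le> C * K * real b powr (- \<gamma> * real n) * (\<Sum>m<n. (a * real b powr \<gamma>) ^ m)"
proof -
  define x where "x = real (k + 1) / real b ^ n"
  define y where "y = real k / real b ^ n"
  have "f x - f y = (\<Sum>m<n. c m * (\<phi> (real b ^ m * x) - \<phi> (real b ^ m * y)))"
    unfolding f x_def y_def badic_series_eq_partial_sum[where \<phi> = \<phi>, OF assms(1) \<phi>_nat]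
    by (simp add: sum_subtractf right_diff_distrib)
  then have "\<bar>f x - f y\<bar> \<le> (\<Sum>m<n. \<bar>c m\<bar> * \<bar>\<phi> (real b ^ m * x) - \<phi> (real b ^ m * y)\<bar>)"
    using sum_abs[of "\<lambda>m. c m * (\<phi> (real b ^ m * x) - \<phi> (real b ^ m * y))" "{..<n}"]
    by (simp add: abs_mult)
  also have "\<dots> \<le> (\<Sum>m<n. K * a ^ m * (C * real b powr ((real m - real n) * \<gamma>)))"
  proof (rule sum_mono)
    fix m
    have "\<bar>real b ^ m * x - real b ^ m * y\<bar> = real b powr (real m - real n)"
      using assms(1) by (simp add: x_def y_def powr_diff powr_realpow field_simps)
    then have "\<bar>\<phi> (real b ^ m * x) - \<phi> (real b ^ m * y)\<bar>
        \<le> C * real b powr ((real m - real n) * \<gamma>)"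
      using \<phi>_hoelder assms(1) by (metis powr_powr)
    then show "\<bar>c m\<bar> * \<bar>\<phi> (real b ^ m * x) - \<phi> (real b ^ m * y)\<bar>
        \<le> K * a ^ m * (C * real b powr ((real m - real n) * \<gamma>))"
      using c_le by (intro mult_mono) (auto intro: order_trans[OF abs_ge_zero])
  qed
  also have "\<dots> = C * K * real b powr (- \<gamma> * real n) * (\<Sum>m<n. (a * real b powr \<gamma>) ^ m)"
    using assms(1)
    by (simp add: sum_distrib_left power_mult_distrib powr_realpow[symmetric] powr_powr
        powr_add[symmetric] algebra_simps)
  finally show ?thesis by (simp add: x_def y_def)
qed

lemma riesz_var_badic_le:
  fixes b n :: nat
  assumes "b > 0" "p \<ge> 0"
    and incr_le: "\<And>k. k < b ^ n \<Longrightarrow>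
      \<bar>g (real (k + 1) / real b ^ n) - g (real k / real b ^ n)\<bar> \<le> E"
  shows "riesz_var_badic b p g n \<le> (real b ^ n * E) powr p"
proof -
  have E: "E \<ge> 0"
    using incr_le[of 0] assms(1) by (meson abs_ge_zero order_trans zero_less_power)
  have "(\<Sum>k<b ^ n. \<bar>g (real (k + 1) / real b ^ n) - g (real k / real b ^ n)\<bar> powr p)
      \<le> (\<Sum>k<b ^ n. E powr p)"
    by (intro sum_mono powr_mono2 assms(2) abs_ge_zero incr_le) simp
  then have "riesz_var_badic b p g n \<le> real b powr (real n * (p - 1)) * (real b ^ n * E powr p)"
    unfolding riesz_var_badic_def by (intro mult_left_mono) simp_all
  also have "\<dots> = (real b ^ n * E) powr p"
    using assms(1) E
    by (simp add: powr_mult powr_realpow[symmetric] powr_powr powr_add[symmetric] algebra_simps)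
  finally show ?thesis .
qed

lemma riesz_var_badic_lacunary_series_le:
  fixes b n :: nat and c :: "nat \<Rightarrow> real"
  assumes "b > 0" "p \<ge> 0"
    and \<phi>_nat: "\<And>j::nat. \<phi> (real j) = 0"
    and \<phi>_hoelder: "\<And>x y. \<bar>\<phi> x - \<phi> y\<bar> \<le> C * \<bar>x - y\<bar> powr \<gamma>"
    and c_le: "\<And>m. \<bar>c m\<bar> \<le> K * a ^ m"
    and f: "\<And>t. f t = (\<Sum>m. c m * \<phi> (real b ^ m * t))"
  shows "riesz_var_badic b p f n
       \<le> (C * K * real b powr ((1 - \<gamma>) * real n) * (\<Sum>m<n. (a * real b powr \<gamma>) ^ m)) powr p"
proof -
  have scale: "real b ^ n *
        (C * K * real b powr (- \<gamma> * real n) * (\<Sum>m<n. (a * real b powr \<gamma>) ^ m))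
      = C * K * real b powr ((1 - \<gamma>) * real n) * (\<Sum>m<n. (a * real b powr \<gamma>) ^ m)"
    using assms(1) by (simp add: powr_realpow[symmetric] powr_add[symmetric] algebra_simps)
  show ?thesis
    unfolding scale[symmetric]
    using assms(1,2) badic_increment_le[OF assms(1) \<phi>_nat \<phi>_hoelder c_le f]
    by (rule riesz_var_badic_le)
qed

lemma div_powr_le_powr:
  fixes R F K d p :: real
  assumes "R \<le> F powr p" "0 \<le> F" "F \<le> K * d" "0 \<le> d" "0 \<le> p"
  shows "R / d powr p \<le> K powr p"
proof (cases "d = 0")
  case True
  then show ?thesis by simp
next
  case False
  then have "R / d powr p \<le> F powr p / d powr p"
    using assms by (intro divide_right_mono) auto
  also have "\<dots> = (F / d) powr p"
    using assms by (simp add: powr_divide)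
  also have "\<dots> \<le> K powr p"
    using assms False by (intro powr_mono2) (auto simp: divide_le_eq mult.commute)
  finally show ?thesis .
qed

lemma limsup_div_powr_less_infinity:
  fixes R F d :: "nat \<Rightarrow> real"
  assumes "\<And>n. R n \<le> F n powr p" "\<And>n. 0 \<le> F n" "\<And>n. F n \<le> K * d n" "\<And>n. 0 \<le> d n"
    and "0 \<le> p"
  shows "limsup (\<lambda>n. ereal (R n / d n powr p)) < \<infinity>"
proof -
  have "limsup (\<lambda>n. ereal (R n / d n powr p)) \<le> ereal (K powr p)"
    using div_powr_le_powr[OF assms]
    by (intro Limsup_bounded always_eventually allI) simp
  then show ?thesis
    by (rule order.strict_trans1) simp
qed

context
  fixes R :: "nat \<Rightarrow> real" and L B \<gamma> q p :: real
  assumes R_le: "\<And>n. R n \<le> (L * B powr ((1 - \<gamma>) * real n) * (\<Sum>m<n. q ^ m)) powr p"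
    and L: "0 \<le> L" and B: "0 < B" and q: "0 \<le> q" and p: "0 \<le> p"
begin

private lemma bound_nonneg: "0 \<le> L * B powr ((1 - \<gamma>) * real n) * (\<Sum>m<n. q ^ m)"
  using L q by (simp add: sum_nonneg)

private lemma powr_scale: "B powr (p * c * real n) = (B powr (c * real n)) powr p"
  by (simp add: powr_powr mult_ac)

lemma limsup_geometric_bound_ratio_less_1:
  assumes "q < 1"
  shows "limsup (\<lambda>n. ereal (R n / B powr (p * (1 - \<gamma>) * real n))) < \<infinity>"
  unfolding powr_scale
proof (rule limsup_div_powr_less_infinity[OF R_le bound_nonneg _ _ p])
  fix n
  have "(\<Sum>m<n. q ^ m) = (1 - q ^ n) / (1 - q)"
    using assms by (simp add: sum_gp_strict)
  also have "\<dots> \<le> 1 / (1 - q)"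
    using assms q by (intro divide_right_mono) auto
  finally have "L * B powr ((1 - \<gamma>) * real n) * (\<Sum>m<n. q ^ m)
      \<le> L * B powr ((1 - \<gamma>) * real n) * (1 / (1 - q))"
    using L by (intro mult_left_mono) auto
  then show "L * B powr ((1 - \<gamma>) * real n) * (\<Sum>m<n. q ^ m)
      \<le> L / (1 - q) * B powr ((1 - \<gamma>) * real n)"
    by simp
qed simp

lemma limsup_geometric_bound_ratio_eq_1:
  assumes "q = 1"
  shows "limsup (\<lambda>n. ereal (R n / (real n powr p * B powr (p * (1 - \<gamma>) * real n)))) < \<infinity>"
proof -
  have "real n powr p * B powr (p * (1 - \<gamma>) * real n)
      = (real n * B powr ((1 - \<gamma>) * real n)) powr p" for n
    by (simp add: powr_mult powr_scale)
  then show ?thesis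
    by (simp only:) (rule limsup_div_powr_less_infinity[where K = L, OF R_le bound_nonneg _ _ p],
        simp_all add: assms)
qed

lemma limsup_geometric_bound_ratio_greater_1:
  assumes "q > 1" and \<beta>: "B powr (\<gamma> - \<beta>) = q"
  shows "limsup (\<lambda>n. ereal (R n / B powr (p * (1 - \<beta>) * real n))) < \<infinity>"
  unfolding powr_scale
proof (rule limsup_div_powr_less_infinity[OF R_le bound_nonneg _ _ p])
  fix n
  have "(\<Sum>m<n. q ^ m) = (q ^ n - 1) / (q - 1)"
    using assms by (simp add: geometric_sum)
  also have "\<dots> \<le> q ^ n / (q - 1)"
    using assms by (intro divide_right_mono) auto
  finally have "L * B powr ((1 - \<gamma>) * real n) * (\<Sum>m<n. q ^ m)
      \<le> L * B powr ((1 - \<gamma>) * real n) * (q ^ n / (q - 1))"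
    using L by (intro mult_left_mono) auto
  also have "\<dots> = L / (q - 1) * (B powr ((1 - \<gamma>) * real n) * q ^ n)"
    by simp
  also have "B powr ((1 - \<gamma>) * real n) * q ^ n = B powr ((1 - \<beta>) * real n)"
    using B by (simp add: \<beta>[symmetric] powr_realpow[symmetric] powr_powr powr_add[symmetric]
        algebra_simps)
  finally show "L * B powr ((1 - \<gamma>) * real n) * (\<Sum>m<n. q ^ m)
      \<le> L / (q - 1) * B powr ((1 - \<beta>) * real n)" .
qed simp

end

theorem theorem4p2:
  fixes b :: nat and \<xi> :: "nat \<Rightarrow> real" and \<phi> \<psi> :: "real \<Rightarrow> real"
    and \<gamma> p :: real and f :: "real \<Rightarrow> real"
  assumes b: "b \<ge> 2"
    and xi: "\<And>m. \<xi> m \<in> {-1, 1}"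
    and phi_per: "\<And>x. \<phi> (x + 1) = \<phi> x"
    and phi_int: "\<And>k::int. \<phi> (of_int k) = 0"
    and gamma: "0 < \<gamma>" "\<gamma> \<le> 1"
    and phi_hoelder: "\<exists>C. \<forall>x y. \<bar>\<phi> x - \<phi> y\<bar> \<le> C * \<bar>x - y\<bar> powr \<gamma>"
    and psi_pos: "\<And>x. x > 0 \<Longrightarrow> \<psi> x > 0"
    and psi_sub: "submultiplicative \<psi>"
    and psi_b: "\<psi> (1 / real b) < 1"
    and f_def: "\<And>t. f t = (\<Sum>m. \<xi> m * \<psi> (1 / real b ^ m) * \<phi> (real b ^ m * t))"
    and p: "p \<ge> 1"
  shows
    "(\<psi> (1 / real b) < real b powr (-\<gamma>) \<longrightarrow>
       limsup (\<lambda>n. ereal (riesz_var_badic b p f n / real b powr (p * (1 - \<gamma>) * real n)))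
         < \<infinity>) \<and>
     (\<psi> (1 / real b) = real b powr (-\<gamma>) \<longrightarrow>
       limsup (\<lambda>n. ereal (riesz_var_badic b p f n /
                  (real n powr p * real b powr (p * (1 - \<gamma>) * real n)))) < \<infinity>) \<and>
     (\<psi> (1 / real b) > real b powr (-\<gamma>) \<longrightarrow>
       (let \<beta> = - log (real b) (\<psi> (1 / real b)) in
        limsup (\<lambda>n. ereal (riesz_var_badic b p f n / real b powr (p * (1 - \<beta>) * real n)))
          < \<infinity>))"
proof -
  obtain C where hoelder: "\<And>x y. \<bar>\<phi> x - \<phi> y\<bar> \<le> C * \<bar>x - y\<bar> powr \<gamma>"
    using phi_hoelder by blast
  have phi_nat: "\<phi> (real j) = 0" for j :: nat
    using phi_int[of "int j"] by simp
  have "C \<ge> 0"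
    using hoelder[of 1 0] phi_nat[of 0] phi_nat[of 1] by simp
  have "real b > 0" "p \<ge> 0"
    using b p by simp_all
  define a where "a = \<psi> (1 / real b)"
  define q where "q = a * real b powr \<gamma>"
  have a: "a > 0" and "C * \<psi> 1 \<ge> 0" and "q \<ge> 0"
    using psi_pos[of 1] psi_pos[of "1 / real b"] b \<open>C \<ge> 0\<close>
    by (simp_all add: a_def q_def)
  have coef: "\<bar>\<xi> m * \<psi> (1 / real b ^ m)\<bar> \<le> \<psi> 1 * a ^ m" for m
    using xi[of m] psi_pos[of "1 / real b ^ m"] b
      submultiplicative_power_le[OF psi_sub, of "1 / real b" m] a
    by (auto simp: a_def power_one_over abs_mult)
  have RV: "riesz_var_badic b p f n
      \<le> (C * \<psi> 1 * real b powr ((1 - \<gamma>) * real n) * (\<Sum>m<n. q ^ m)) powr p" for n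
    unfolding q_def using b p
    by (intro riesz_var_badic_lacunary_series_le[OF _ _ phi_nat hoelder coef f_def]) auto
  note bound = RV \<open>C * \<psi> 1 \<ge> 0\<close> \<open>real b > 0\<close> \<open>q \<ge> 0\<close> \<open>p \<ge> 0\<close>
  have q_cases: "a < real b powr -\<gamma> \<longleftrightarrow> q < 1" "a = real b powr -\<gamma> \<longleftrightarrow> q = 1"
      "a > real b powr -\<gamma> \<longleftrightarrow> q > 1"
    using b by (auto simp: q_def powr_minus divide_simps)
  have \<beta>: "real b powr (\<gamma> - (- log (real b) a)) = q"
    using a b by (simp add: q_def powr_add)
  show ?thesis
    using limsup_geometric_bound_ratio_less_1[OF bound]
      limsup_geometric_bound_ratio_eq_1[OF bound]
      limsup_geometric_bound_ratio_greater_1[OF bound _ \<beta>]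
    unfolding Let_def a_def[symmetric] q_cases by blast
qed

end
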